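(* Let $(M,g)$ be a Riemannian manifold isometrically immersed into a Riemannian manifold $(N,\widetilde g)$ carrying a Riemannian $(a,b)$-complex metallic structure $\widetilde P$, and let $P,Q,R,S$ be defined by $\widetilde PX=PX+QX$ and $\widetilde P\xi=R\xi+S\xi$ (tangent plus normal parts) for $X$ tangent and $\xi$ normal to $M$. Then $M$ is invariant (i.e. $\widetilde P(T_xM)\subset T_xM$ for all $x\in M$) if and only if $P$ is a non-trivial Riemannian $(a,b)$-complex metallic structure on $M$. In particular, invariant submanifolds of Riemannian manifolds with a Riemannian $(a,b)$-complex metallic structure are even-dimensional.
   Context: For $a,b>0$ with $a<2\sqrt b$, an $(a,b)$-complex metallic structure is a $(1,1)$-tensor $J$ with $J^2+aJ+b\,\mathrm{id}=0$; it is Riemannian for a metric $g$ if $g(JX,Y)=-g(X,JY)-a\,g(X,Y)$. *)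

theory Defs
  imports "HOL-Analysis.Analysis"
begin

definition complex_metallic_on :: "'a::real_inner set \<Rightarrow> real \<Rightarrow> real \<Rightarrow> ('a \<Rightarrow> 'a) \<Rightarrow> bool" where
  "complex_metallic_on W a b J \<longleftrightarrow>
     (\<forall>X\<in>W. J X \<in> W \<and> J (J X) + a *\<^sub>R J X + b *\<^sub>R X = 0)"

definition riem_complex_metallic_on :: "'a::real_inner set \<Rightarrow> real \<Rightarrow> real \<Rightarrow> ('a \<Rightarrow> 'a) \<Rightarrow> bool" where
  "riem_complex_metallic_on W a b J \<longleftrightarrow>
     complex_metallic_on W a b J \<and>
     (\<forall>X\<in>W. \<forall>Y\<in>W. inner (J X) Y = - inner X (J Y) - a * inner X Y)"

end

theory Submission imports Defs begin

text \<open>A Riemannian complex metallic structure multiplies squared norms by b, so on a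
  tangent space the tangential part P of the ambient structure is again such a structure
  exactly when the normal part Q vanishes there, i.e. when the tangent space is invariant.
  Since the roots of t^2 + a t + b are not real, J has no real eigenvector: any nonzero v
  spans with J v an invariant plane, whose orthogonal complement is again invariant by the
  compatibility with the metric, so invariant subspaces split into invariant planes and
  are even-dimensional.\<close>

lemma quadratic_pos_of_discrim_neg:
  fixes a b c :: real
  assumes "a\<^sup>2 < 4 * b"
  shows "c * c + a * c + b > 0"
proof -
  have "4 * (c * c + a * c + b) = (2 * c + a)\<^sup>2 + (4 * b - a\<^sup>2)"
    by (simp add: power2_eq_square algebra_simps)
  moreover have "(2 * c + a)\<^sup>2 \<ge> 0" by simp
  ultimately show ?thesis using assms by (smt (verit))
qed

lemma riem_complex_metallic_on_subset:
  assumes "riem_complex_metallic_on W a b J" "V \<subseteq> W" "J ` V \<subseteq> V"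
  shows "riem_complex_metallic_on V a b J"
  using assms unfolding riem_complex_metallic_on_def complex_metallic_on_def by blast

lemma riem_complex_metallic_inner_self:
  assumes "riem_complex_metallic_on W a b J" "X \<in> W"
  shows "inner (J X) (J X) = b * inner X X"
proof -
  have JX: "J X \<in> W" and sq: "J (J X) + a *\<^sub>R J X + b *\<^sub>R X = 0"
    using assms unfolding riem_complex_metallic_on_def complex_metallic_on_def by auto
  have "inner (J X) (J X) = - inner X (J (J X)) - a * inner X (J X)"
    using assms JX unfolding riem_complex_metallic_on_def by auto
  moreover have "J (J X) = - (a *\<^sub>R J X) - b *\<^sub>R X"
    using sq by (simp add: eq_neg_iff_add_eq_0 algebra_simps)
  ultimately show ?thesis by (simp add: inner_diff_right)
qed

lemma riem_complex_metallic_nontrivial: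
  assumes "riem_complex_metallic_on W a b J" "b > 0" "X \<in> W" "X \<noteq> 0"
  shows "J X \<noteq> 0"
  using riem_complex_metallic_inner_self[OF assms(1,3)] assms(2,4) by auto

lemma complex_metallic_no_eigenvector:
  assumes "linear J" "a\<^sup>2 < 4 * b" "J (J v) + a *\<^sub>R J v + b *\<^sub>R v = 0" "v \<noteq> 0"
  shows "J v \<notin> span {v}"
proof
  assume "J v \<in> span {v}"
  then obtain c where c: "J v = c *\<^sub>R v" by (auto simp: span_singleton)
  then have "J (J v) = (c * c) *\<^sub>R v" using assms(1) by (simp add: linear_scale)
  then have "(c * c + a * c + b) *\<^sub>R v = 0" using assms(3) c by (simp add: algebra_simps)
  then show False
    using assms(4) quadratic_pos_of_discrim_neg[OF assms(2), of c] by simp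
qed

lemma complex_metallic_invariant_plane:
  assumes "linear J" "a\<^sup>2 < 4 * b" "J (J v) + a *\<^sub>R J v + b *\<^sub>R v = 0" "v \<noteq> 0"
  shows "dim (span {v, J v}) = 2" and "J ` span {v, J v} \<subseteq> span {v, J v}"
proof -
  have notin: "J v \<notin> span {v}" using complex_metallic_no_eigenvector[OF assms] .
  then have neq: "J v \<noteq> v" by (metis span_base singletonI)
  have "independent {J v, v}"
    using notin assms(4) neq by (simp add: independent_insert)
  then have "independent {v, J v}" by (simp add: insert_commute)
  then show "dim (span {v, J v}) = 2"
    using dim_span_eq_card_independent neq by (metis card_2_iff)
  have JJ: "J (J v) = - a *\<^sub>R J v - b *\<^sub>R v"
    using assms(3) by (simp add: eq_neg_iff_add_eq_0 algebra_simps)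
  have "J (J v) \<in> span {v, J v}"
    unfolding JJ by (intro span_diff span_mul span_base) auto
  then have "J ` {v, J v} \<subseteq> span {v, J v}"
    by (auto intro: span_base)
  then show "J ` span {v, J v} \<subseteq> span {v, J v}"
    by (simp add: span_linear_image[OF assms(1), symmetric] span_minimal)
qed

lemma riem_complex_metallic_orthogonal_complement:
  assumes "riem_complex_metallic_on W a b J" "A \<subseteq> W" "J ` A \<subseteq> A"
  shows "J ` {y \<in> W. \<forall>x\<in>A. orthogonal x y} \<subseteq> {y \<in> W. \<forall>x\<in>A. orthogonal x y}"
proof clarify
  fix y assume y: "y \<in> W" "\<forall>x\<in>A. orthogonal x y"
  have "orthogonal x (J y)" if "x \<in> A" for x
  proof -
    have "inner (J x) y = 0" and "inner x y = 0"
      using assms(3) that y(2) unfolding orthogonal_def by auto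
    then show ?thesis
      using assms(1,2) that y(1) unfolding riem_complex_metallic_on_def orthogonal_def by auto
  qed
  then show "J y \<in> W \<and> (\<forall>x\<in>A. orthogonal x (J y))"
    using assms(1) y(1) unfolding riem_complex_metallic_on_def complex_metallic_on_def by auto
qed

lemma riem_complex_metallic_even_dim:
  fixes J :: "'n::euclidean_space \<Rightarrow> 'n"
  assumes "linear J" "a\<^sup>2 < 4 * b" "subspace W" "riem_complex_metallic_on W a b J"
  shows "even (dim W)"
  using assms(3,4)
proof (induction "dim W" arbitrary: W rule: less_induct)
  case (less W)
  show ?case
  proof (cases "W \<subseteq> {0}")
    case True
    then show ?thesis by (metis dim_eq_0 even_zero)
  next
    case False
    then obtain v where v: "v \<in> W" "v \<noteq> 0" by auto
    define A where "A = span {v, J v}"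
    define U where "U = {y \<in> W. \<forall>x\<in>A. orthogonal x y}"
    have "J v \<in> W" and sq: "J (J v) + a *\<^sub>R J v + b *\<^sub>R v = 0"
      using less.prems(2) v(1)
      unfolding riem_complex_metallic_on_def complex_metallic_on_def by auto
    then have AW: "A \<subseteq> W" unfolding A_def using v(1) less.prems(1) by (simp add: span_minimal)
    note plane = complex_metallic_invariant_plane[OF assms(1,2) sq v(2), folded A_def]
    have dimU: "dim U + 2 = dim W"
      using dim_subspace_orthogonal_to_vectors[OF subspace_span less.prems(1), of "{v, J v}"] AW plane(1)
      unfolding U_def A_def by simp
    have "subspace U"
      using less.prems(1) unfolding U_def subspace_def orthogonal_def by (simp add: inner_add_right)
    moreover have "riem_complex_metallic_on U a b J"
      using riem_complex_metallic_on_subset[OF less.prems(2) _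
              riem_complex_metallic_orthogonal_complement[OF less.prems(2) AW plane(2)]]
      unfolding U_def by blast
    ultimately have "even (dim U)" using less.hyps dimU by simp
    then show ?thesis using dimU by presburger
  qed
qed

lemma tangent_part_eq_iff:
  assumes "subspace W" "X \<in> W" "P X \<in> W" "\<forall>Y\<in>W. inner (Q X) Y = 0" "J X = P X + Q X"
  shows "J X \<in> W \<longleftrightarrow> J X = P X"
proof
  assume "J X \<in> W"
  then have "Q X \<in> W" using assms(1,3,5) by (metis add_diff_cancel_left' subspace_diff)
  then show "J X = P X" using assms(4,5) by auto
qed (use assms(3) in simp)

lemma invariant_iff_tangent_part_riem_complex_metallic:
  fixes W :: "'n::real_inner set"
  assumes "b > 0" "subspace W" "W \<noteq> {0}" "riem_complex_metallic_on UNIV a b J"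
    and decomp: "\<forall>X\<in>W. P X \<in> W \<and> (\<forall>Y\<in>W. inner (Q X) Y = 0) \<and> J X = P X + Q X"
  shows "J ` W \<subseteq> W \<longleftrightarrow> riem_complex_metallic_on W a b P \<and> (\<exists>X\<in>W. P X \<noteq> 0)"
proof
  assume inv: "J ` W \<subseteq> W"
  have JP: "J X = P X" if "X \<in> W" for X
    using tangent_part_eq_iff[OF assms(2) that] decomp inv that by auto
  have "riem_complex_metallic_on W a b J"
    using riem_complex_metallic_on_subset[OF assms(4) _ inv] by simp
  then have riemP: "riem_complex_metallic_on W a b P"
    unfolding riem_complex_metallic_on_def complex_metallic_on_def using JP by auto
  obtain X where "X \<in> W" "X \<noteq> 0" using assms(2,3) subspace_0 by blast
  then show "riem_complex_metallic_on W a b P \<and> (\<exists>X\<in>W. P X \<noteq> 0)"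
    using riemP riem_complex_metallic_nontrivial[OF riemP assms(1)] by blast
next
  assume "riem_complex_metallic_on W a b P \<and> (\<exists>X\<in>W. P X \<noteq> 0)"
  then have riemP: "riem_complex_metallic_on W a b P" ..
  show "J ` W \<subseteq> W"
  proof clarify
    fix X assume X: "X \<in> W"
    have h: "P X \<in> W" "inner (Q X) (P X) = 0" "J X = P X + Q X" using decomp X by auto
    have "inner (J X) (J X) = inner (P X) (P X) + inner (Q X) (Q X)"
      using h(2,3) by (simp add: inner_add_left inner_add_right inner_commute)
    then have "Q X = 0"
      using riem_complex_metallic_inner_self[OF assms(4)] riem_complex_metallic_inner_self[OF riemP X]
      by simp
    then show "J X \<in> W" using h by simp
  qed
qed

theorem proposition4p4:
  fixes a b :: real
    and Mpts :: "'m set"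
    and TM :: "'m \<Rightarrow> 'n::euclidean_space set"
    and Pt P Q :: "'m \<Rightarrow> 'n \<Rightarrow> 'n"
  assumes "a > 0" and "b > 0" and "a < 2 * sqrt b"
    and "\<forall>x\<in>Mpts. subspace (TM x) \<and> dim (TM x) \<ge> 1"
    and "\<forall>x\<in>Mpts. linear (Pt x) \<and> riem_complex_metallic_on UNIV a b (Pt x)"
    and "\<forall>x\<in>Mpts. \<forall>X\<in>TM x. P x X \<in> TM x \<and> (\<forall>Y\<in>TM x. inner (Q x X) Y = 0)
                          \<and> Pt x X = P x X + Q x X"
  shows "((\<forall>x\<in>Mpts. Pt x ` TM x \<subseteq> TM x) \<longleftrightarrow>
           (\<forall>x\<in>Mpts. riem_complex_metallic_on (TM x) a b (P x) \<and> (\<exists>X\<in>TM x. P x X \<noteq> 0)))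
         \<and> ((\<forall>x\<in>Mpts. Pt x ` TM x \<subseteq> TM x) \<longrightarrow> (\<forall>x\<in>Mpts. even (dim (TM x))))"
proof -
  have "a\<^sup>2 < (2 * sqrt b)\<^sup>2" using assms(1,3) by (intro power_strict_mono) auto
  then have disc: "a\<^sup>2 < 4 * b" using assms(2) by (simp add: power_mult_distrib)
  have nonzero: "TM x \<noteq> {0}" if "x \<in> Mpts" for x
  proof
    assume "TM x = {0}"
    then have "dim (TM x) = 0" using dim_eq_0 by blast
    moreover have "dim (TM x) \<ge> 1" using assms(4) that by blast
    ultimately show False by linarith
  qed
  have pointwise: "Pt x ` TM x \<subseteq> TM x \<longleftrightarrow>
      riem_complex_metallic_on (TM x) a b (P x) \<and> (\<exists>X\<in>TM x. P x X \<noteq> 0)" if "x \<in> Mpts" for x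
    using assms(4-6) that
    by (intro invariant_iff_tangent_part_riem_complex_metallic[OF assms(2) _ nonzero[OF that]]) auto
  have "even (dim (TM x))" if x: "x \<in> Mpts" and inv: "Pt x ` TM x \<subseteq> TM x" for x
  proof (rule riem_complex_metallic_even_dim[OF _ disc])
    show "linear (Pt x)" "subspace (TM x)" using assms(4,5) x by auto
    show "riem_complex_metallic_on (TM x) a b (Pt x)"
      using riem_complex_metallic_on_subset[OF _ _ inv] assms(5) x by blast
  qed
  then show ?thesis using pointwise by blast
qed

end
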